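(* Let $A$ be a skew brace. Then: (i) $H(A)=\emptyset$ and $H(0)=\mathrm{Spec}\,A$, where $0=\{e\}$; (ii) $H(I)\cup H(J)=H(I\cap J)=H(I*J)$ for all ideals $I,J$ of $A$; (iii) $\bigcap_{\lambda\in\Lambda}H(I_\lambda)=H\big(\sum_{\lambda\in\Lambda}I_\lambda\big)$ for every family $\{I_\lambda\}_{\lambda\in\Lambda}$ of ideals of $A$.
   Context: A (left) skew brace is a triple $(A,+,\circ)$ where $(A,+)$ and $(A,\circ)$ are groups such that $a\circ(b+c)=a\circ b-a+a\circ c$ for all $a,b,c$; common identity $e$. Put $\lambda_a(b)=-a+a\circ b$ and $a*b=-a+a\circ b-b$. An ideal is a normal subgroup $I$ of both $(A,+)$ and $(A,\circ)$ with $\lambda_a(I)\subseteq I$ for all $a$. For ideals $I,J$, $I*J$ is the ideal generated by $\{i*j\mid i\in I,j\in J\}$; $\sum_\lambda I_\lambda$ is the additive subgroup generated by $\bigcup_\lambda I_\lambda$ (finite sums). A prime ideal is a proper ideal $P$ such that for any subsets $X,Y$ of $A$, $\{x*y\mid x\in X,y\in Y\}\subseteq P$ implies $X\subseteq P$ or $Y\subseteq P$; $\mathrm{Spec}\,A$ is the set of prime ideals, and for an ideal $I$, $H(I)=\{P\in\mathrm{Spec}\,A\mid I\subseteq P\}$. *)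

theory Defs
  imports "HOL-Algebra.Algebra"
begin

definition add_grp :: "'a set \<Rightarrow> ('a \<Rightarrow> 'a \<Rightarrow> 'a) \<Rightarrow> 'a \<Rightarrow> 'a monoid" where
  "add_grp A pl e = \<lparr>carrier = A, monoid.mult = pl, monoid.one = e\<rparr>"

definition circ_grp :: "'a set \<Rightarrow> ('a \<Rightarrow> 'a \<Rightarrow> 'a) \<Rightarrow> 'a \<Rightarrow> 'a monoid" where
  "circ_grp A circ e = \<lparr>carrier = A, monoid.mult = circ, monoid.one = e\<rparr>"

definition aneg :: "'a set \<Rightarrow> ('a \<Rightarrow> 'a \<Rightarrow> 'a) \<Rightarrow> 'a \<Rightarrow> 'a \<Rightarrow> 'a" where
  "aneg A pl e x = inv\<^bsub>add_grp A pl e\<^esub> x"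

definition skew_brace :: "'a set \<Rightarrow> ('a \<Rightarrow> 'a \<Rightarrow> 'a) \<Rightarrow> ('a \<Rightarrow> 'a \<Rightarrow> 'a) \<Rightarrow> 'a \<Rightarrow> bool" where
  "skew_brace A pl circ e \<longleftrightarrow>
     group (add_grp A pl e) \<and> group (circ_grp A circ e) \<and>
     (\<forall>a\<in>A. \<forall>b\<in>A. \<forall>c\<in>A.
        circ a (pl b c) = pl (pl (circ a b) (aneg A pl e a)) (circ a c))"

definition blambda :: "'a set \<Rightarrow> ('a \<Rightarrow> 'a \<Rightarrow> 'a) \<Rightarrow> ('a \<Rightarrow> 'a \<Rightarrow> 'a) \<Rightarrow> 'a \<Rightarrow> 'a \<Rightarrow> 'a \<Rightarrow> 'a" where
  "blambda A pl circ e a b = pl (aneg A pl e a) (circ a b)"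

definition bstar :: "'a set \<Rightarrow> ('a \<Rightarrow> 'a \<Rightarrow> 'a) \<Rightarrow> ('a \<Rightarrow> 'a \<Rightarrow> 'a) \<Rightarrow> 'a \<Rightarrow> 'a \<Rightarrow> 'a \<Rightarrow> 'a" where
  "bstar A pl circ e a b = pl (pl (aneg A pl e a) (circ a b)) (aneg A pl e b)"

definition brace_ideal :: "'a set \<Rightarrow> ('a \<Rightarrow> 'a \<Rightarrow> 'a) \<Rightarrow> ('a \<Rightarrow> 'a \<Rightarrow> 'a) \<Rightarrow> 'a \<Rightarrow> 'a set \<Rightarrow> bool" where
  "brace_ideal A pl circ e I \<longleftrightarrow>
     I \<subseteq> A \<and> normal I (add_grp A pl e) \<and> normal I (circ_grp A circ e) \<and>
     (\<forall>a\<in>A. \<forall>x\<in>I. blambda A pl circ e a x \<in> I)"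

definition ideal_gen :: "'a set \<Rightarrow> ('a \<Rightarrow> 'a \<Rightarrow> 'a) \<Rightarrow> ('a \<Rightarrow> 'a \<Rightarrow> 'a) \<Rightarrow> 'a \<Rightarrow> 'a set \<Rightarrow> 'a set" where
  "ideal_gen A pl circ e S = \<Inter>{I. brace_ideal A pl circ e I \<and> S \<subseteq> I}"

definition ideal_prod :: "'a set \<Rightarrow> ('a \<Rightarrow> 'a \<Rightarrow> 'a) \<Rightarrow> ('a \<Rightarrow> 'a \<Rightarrow> 'a) \<Rightarrow> 'a \<Rightarrow> 'a set \<Rightarrow> 'a set \<Rightarrow> 'a set" where
  "ideal_prod A pl circ e I J =
     ideal_gen A pl circ e {bstar A pl circ e i j | i j. i \<in> I \<and> j \<in> J}"

definition ideal_sum :: "'a set \<Rightarrow> ('a \<Rightarrow> 'a \<Rightarrow> 'a) \<Rightarrow> 'a \<Rightarrow> 'i set \<Rightarrow> ('i \<Rightarrow> 'a set) \<Rightarrow> 'a set" where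
  "ideal_sum A pl e \<Lambda> Is = generate (add_grp A pl e) (\<Union>l\<in>\<Lambda>. Is l)"

definition prime_ideal :: "'a set \<Rightarrow> ('a \<Rightarrow> 'a \<Rightarrow> 'a) \<Rightarrow> ('a \<Rightarrow> 'a \<Rightarrow> 'a) \<Rightarrow> 'a \<Rightarrow> 'a set \<Rightarrow> bool" where
  "prime_ideal A pl circ e P \<longleftrightarrow>
     brace_ideal A pl circ e P \<and> P \<noteq> A \<and>
     (\<forall>U V. U \<subseteq> A \<longrightarrow> V \<subseteq> A \<longrightarrow>
        {bstar A pl circ e x y | x y. x \<in> U \<and> y \<in> V} \<subseteq> P \<longrightarrow> U \<subseteq> P \<or> V \<subseteq> P)"

definition Spec :: "'a set \<Rightarrow> ('a \<Rightarrow> 'a \<Rightarrow> 'a) \<Rightarrow> ('a \<Rightarrow> 'a \<Rightarrow> 'a) \<Rightarrow> 'a \<Rightarrow> 'a set set" where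
  "Spec A pl circ e = {P. prime_ideal A pl circ e P}"

definition Hull :: "'a set \<Rightarrow> ('a \<Rightarrow> 'a \<Rightarrow> 'a) \<Rightarrow> ('a \<Rightarrow> 'a \<Rightarrow> 'a) \<Rightarrow> 'a \<Rightarrow> 'a set \<Rightarrow> 'a set set" where
  "Hull A pl circ e I = {P \<in> Spec A pl circ e. I \<subseteq> P}"

end

theory Submission
  imports Defs
begin

text \<open>Everything reduces to the absorption property of ideals: for ideals I and J every
product i * j with i in I and j in J lies in I and in J. Hence I * J \<subseteq> I \<inter> J, while
primality of P turns each of I * J \<subseteq> P and I \<inter> J \<subseteq> P into "I \<subseteq> P or J \<subseteq> P". Part (iii)
only uses that a prime ideal is an additive subgroup, so it contains the additive
subgroup generated by a union exactly when it contains every member.\<close>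

lemma bstar_mem_of_right_mem:
  assumes J: "brace_ideal A pl circ e J"
    and "a \<in> A" and j: "j \<in> J"
  shows "bstar A pl circ e a j \<in> J"
proof -
  let ?G = "add_grp A pl e"
  have J_sub: "subgroup J ?G"
    using J normal_imp_subgroup by (auto simp: brace_ideal_def)
  have "blambda A pl circ e a j \<in> J"
    using J \<open>a \<in> A\<close> j by (simp add: brace_ideal_def)
  moreover have "aneg A pl e j \<in> J"
    using subgroup.m_inv_closed[OF J_sub j] by (simp add: aneg_def)
  ultimately show ?thesis
    using subgroup.m_closed[OF J_sub]
    by (simp add: bstar_def blambda_def add_grp_def)
qed

lemma bstar_mem_of_left_mem:
  assumes sb: "skew_brace A pl circ e" and I: "brace_ideal A pl circ e I"
    and i: "i \<in> I" and "a \<in> A"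
  shows "bstar A pl circ e i a \<in> I"
proof -
  let ?G = "add_grp A pl e" and ?M = "circ_grp A circ e"
  interpret G: group ?G using sb by (simp add: skew_brace_def)
  interpret M: group ?M using sb by (simp add: skew_brace_def)
  have I_sub_A: "I \<subseteq> A" and I_normal_G: "I \<lhd> ?G" and I_normal_M: "I \<lhd> ?M"
    and I_lambda: "\<forall>x\<in>A. \<forall>y\<in>I. blambda A pl circ e x y \<in> I"
    using I by (simp_all add: brace_ideal_def)
  have I_sub: "subgroup I ?G" using I_normal_G normal_imp_subgroup by blast
  have "i \<in> A" using i I_sub_A by auto
  \<comment> \<open>Move i across a in the circle group: i \<circ> a = a \<circ> k with k circle-conjugate to i,
    and a \<circ> k = a + lambda_a(k), so i * a = -i + (a + lambda_a(k) - a) is a sum of elements of I.\<close>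
  define k where "k = inv\<^bsub>?M\<^esub> a \<otimes>\<^bsub>?M\<^esub> i \<otimes>\<^bsub>?M\<^esub> a"
  have k: "k \<in> I"
    unfolding k_def using normal.inv_op_closed1[OF I_normal_M] \<open>a \<in> A\<close> i
    by (simp add: circ_grp_def)
  have "k \<in> A" using k I_sub_A by auto
  have circ_a_k: "circ a k = circ i a"
  proof -
    have "a \<in> carrier ?M" "i \<in> carrier ?M"
      using \<open>a \<in> A\<close> \<open>i \<in> A\<close> by (simp_all add: circ_grp_def)
    then have "a \<otimes>\<^bsub>?M\<^esub> k = i \<otimes>\<^bsub>?M\<^esub> a"
      by (simp add: k_def flip: M.m_assoc)
    then show ?thesis by (simp add: circ_grp_def)
  qed
  define b where "b = blambda A pl circ e a k"
  have b: "b \<in> I" unfolding b_def using I_lambda \<open>a \<in> A\<close> k by blast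
  have "circ a k \<in> A" using M.m_closed[of a k] \<open>a \<in> A\<close> \<open>k \<in> A\<close> by (simp add: circ_grp_def)
  have "pl a b = circ i a"
    using G.inv_solve_left[of b a "circ a k"] \<open>a \<in> A\<close> \<open>circ a k \<in> A\<close> b I_sub_A
    by (auto simp: b_def blambda_def aneg_def add_grp_def circ_a_k)
  then have "bstar A pl circ e i a = pl (aneg A pl e i) (pl (pl a b) (aneg A pl e a))"
    using G.m_assoc[of "aneg A pl e i" "circ i a" "aneg A pl e a"] G.inv_closed
      \<open>a \<in> A\<close> \<open>i \<in> A\<close> \<open>circ a k \<in> A\<close>
    by (simp add: bstar_def aneg_def add_grp_def circ_a_k)
  moreover have "pl (pl a b) (aneg A pl e a) \<in> I"
    using normal.inv_op_closed2[OF I_normal_G] \<open>a \<in> A\<close> b by (simp add: add_grp_def aneg_def)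
  moreover have "aneg A pl e i \<in> I"
    using subgroup.m_inv_closed[OF I_sub i] by (simp add: aneg_def)
  ultimately show ?thesis
    using subgroup.m_closed[OF I_sub] by (simp add: add_grp_def)
qed

lemma ideal_prod_subset_Int:
  assumes "skew_brace A pl circ e"
    and I: "brace_ideal A pl circ e I" and J: "brace_ideal A pl circ e J"
  shows "ideal_prod A pl circ e I J \<subseteq> I \<inter> J"
proof -
  have "I \<subseteq> A" "J \<subseteq> A" using I J by (simp_all add: brace_ideal_def)
  then have "{bstar A pl circ e i j | i j. i \<in> I \<and> j \<in> J} \<subseteq> I \<inter> J"
    using bstar_mem_of_left_mem[OF assms(1) I] bstar_mem_of_right_mem[OF J] by blast
  then show ?thesis
    using I J by (auto simp: ideal_prod_def ideal_gen_def)
qed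

lemma prime_ideal_psubset:
  "prime_ideal A pl circ e P \<Longrightarrow> P \<subset> A"
  by (auto simp: prime_ideal_def brace_ideal_def)

lemma prime_ideal_subgroup:
  "prime_ideal A pl circ e P \<Longrightarrow> subgroup P (add_grp A pl e)"
  by (auto simp: prime_ideal_def brace_ideal_def normal_imp_subgroup)

lemma prime_ideal_ideal_prod_subset:
  assumes "prime_ideal A pl circ e P" and "I \<subseteq> A" "J \<subseteq> A"
    and "ideal_prod A pl circ e I J \<subseteq> P"
  shows "I \<subseteq> P \<or> J \<subseteq> P"
proof -
  have "{bstar A pl circ e i j | i j. i \<in> I \<and> j \<in> J} \<subseteq> ideal_prod A pl circ e I J"
    by (auto simp: ideal_prod_def ideal_gen_def)
  then show ?thesis
    using assms by (simp add: prime_ideal_def)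
qed

lemma prime_ideal_Int_subset:
  assumes "skew_brace A pl circ e" and "prime_ideal A pl circ e P"
    and I: "brace_ideal A pl circ e I" and J: "brace_ideal A pl circ e J"
    and "I \<inter> J \<subseteq> P"
  shows "I \<subseteq> P \<or> J \<subseteq> P"
proof (rule prime_ideal_ideal_prod_subset[OF assms(2)])
  show "I \<subseteq> A" "J \<subseteq> A" using I J by (simp_all add: brace_ideal_def)
  show "ideal_prod A pl circ e I J \<subseteq> P"
    using ideal_prod_subset_Int[OF assms(1) I J] \<open>I \<inter> J \<subseteq> P\<close> by blast
qed

lemma ideal_sum_subset_iff:
  assumes "group (add_grp A pl e)" and "subgroup P (add_grp A pl e)"
  shows "ideal_sum A pl e \<Lambda> Is \<subseteq> P \<longleftrightarrow> (\<forall>l\<in>\<Lambda>. Is l \<subseteq> P)"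
proof
  assume "ideal_sum A pl e \<Lambda> Is \<subseteq> P"
  moreover have "(\<Union>l\<in>\<Lambda>. Is l) \<subseteq> ideal_sum A pl e \<Lambda> Is"
    unfolding ideal_sum_def by (auto intro: generate.incl)
  ultimately show "\<forall>l\<in>\<Lambda>. Is l \<subseteq> P" by blast
next
  assume "\<forall>l\<in>\<Lambda>. Is l \<subseteq> P"
  then show "ideal_sum A pl e \<Lambda> Is \<subseteq> P"
    unfolding ideal_sum_def using group.generate_subgroup_incl[OF assms(1) _ assms(2)] by blast
qed

lemma Hull_carrier: "Hull A pl circ e A = {}"
  by (auto simp: Hull_def Spec_def dest: prime_ideal_psubset)

lemma Hull_singleton_one: "Hull A pl circ e {e} = Spec A pl circ e"
proof -
  have "e \<in> P" if "prime_ideal A pl circ e P" for P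
    using subgroup.one_closed[OF prime_ideal_subgroup[OF that]] by (simp add: add_grp_def)
  then show ?thesis by (auto simp: Hull_def Spec_def)
qed

lemma Hull_Int:
  assumes "skew_brace A pl circ e"
    and "brace_ideal A pl circ e I" "brace_ideal A pl circ e J"
  shows "Hull A pl circ e I \<union> Hull A pl circ e J = Hull A pl circ e (I \<inter> J)"
  unfolding Hull_def Spec_def using prime_ideal_Int_subset[OF assms(1) _ assms(2,3)] by blast

lemma Hull_eqI:
  assumes "\<And>P. prime_ideal A pl circ e P \<Longrightarrow> I \<subseteq> P \<longleftrightarrow> J \<subseteq> P"
  shows "Hull A pl circ e I = Hull A pl circ e J"
  unfolding Hull_def Spec_def using assms by blast

lemma Hull_ideal_prod:
  assumes "skew_brace A pl circ e"
    and I: "brace_ideal A pl circ e I" and J: "brace_ideal A pl circ e J"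
  shows "Hull A pl circ e (ideal_prod A pl circ e I J) = Hull A pl circ e (I \<inter> J)"
proof (rule Hull_eqI)
  fix P assume P: "prime_ideal A pl circ e P"
  have "I \<subseteq> A" "J \<subseteq> A" using I J by (simp_all add: brace_ideal_def)
  show "ideal_prod A pl circ e I J \<subseteq> P \<longleftrightarrow> I \<inter> J \<subseteq> P"
  proof
    assume "ideal_prod A pl circ e I J \<subseteq> P"
    then have "I \<subseteq> P \<or> J \<subseteq> P"
      using prime_ideal_ideal_prod_subset[OF P \<open>I \<subseteq> A\<close> \<open>J \<subseteq> A\<close>] by blast
    then show "I \<inter> J \<subseteq> P" by blast
  next
    assume "I \<inter> J \<subseteq> P"
    then show "ideal_prod A pl circ e I J \<subseteq> P"
      using ideal_prod_subset_Int[OF assms] by blast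
  qed
qed

lemma Hull_ideal_sum:
  assumes "group (add_grp A pl e)"
  shows "Spec A pl circ e \<inter> (\<Inter>l\<in>\<Lambda>. Hull A pl circ e (Is l))
    = Hull A pl circ e (ideal_sum A pl e \<Lambda> Is)"
proof (rule Set.set_eqI)
  fix P
  show "P \<in> Spec A pl circ e \<inter> (\<Inter>l\<in>\<Lambda>. Hull A pl circ e (Is l))
    \<longleftrightarrow> P \<in> Hull A pl circ e (ideal_sum A pl e \<Lambda> Is)"
  proof (cases "prime_ideal A pl circ e P")
    case True
    then show ?thesis
      by (simp add: Hull_def Spec_def ideal_sum_subset_iff[OF assms prime_ideal_subgroup[OF True]])
  qed (simp add: Hull_def Spec_def)
qed

theorem proposition4p2:
  fixes A :: "'a set" and pl circ :: "'a \<Rightarrow> 'a \<Rightarrow> 'a" and e :: 'a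
  assumes "skew_brace A pl circ e"
  shows "Hull A pl circ e A = {} \<and> Hull A pl circ e {e} = Spec A pl circ e
    \<and> (\<forall>I J. brace_ideal A pl circ e I \<longrightarrow> brace_ideal A pl circ e J \<longrightarrow>
         Hull A pl circ e I \<union> Hull A pl circ e J = Hull A pl circ e (I \<inter> J) \<and>
         Hull A pl circ e (I \<inter> J) = Hull A pl circ e (ideal_prod A pl circ e I J))
    \<and> (\<forall>(\<Lambda>::'i set) (Is::'i \<Rightarrow> 'a set). (\<forall>l\<in>\<Lambda>. brace_ideal A pl circ e (Is l)) \<longrightarrow>
         Spec A pl circ e \<inter> (\<Inter>l\<in>\<Lambda>. Hull A pl circ e (Is l))
           = Hull A pl circ e (ideal_sum A pl e \<Lambda> Is))"
proof -
  have "group (add_grp A pl e)" using assms by (simp add: skew_brace_def)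
  then have sum: "Spec A pl circ e \<inter> (\<Inter>l\<in>\<Lambda>. Hull A pl circ e (Is l))
    = Hull A pl circ e (ideal_sum A pl e \<Lambda> Is)" for \<Lambda> :: "'i set" and Is
    by (rule Hull_ideal_sum)
  show ?thesis
  proof (intro conjI allI impI)
    fix I J assume "brace_ideal A pl circ e I" "brace_ideal A pl circ e J"
    then show "Hull A pl circ e I \<union> Hull A pl circ e J = Hull A pl circ e (I \<inter> J)"
      and "Hull A pl circ e (I \<inter> J) = Hull A pl circ e (ideal_prod A pl circ e I J)"
      by (simp_all add: Hull_Int[OF assms] Hull_ideal_prod[OF assms])
  qed (simp_all only: Hull_carrier Hull_singleton_one sum)
qed

end
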